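(* Let $R>0$. Every $\alpha\in(0,\frac{1}{8R}]$ satisfies $1-3\alpha R-\alpha^2R^2-\alpha^3R^3\ge 0$ and $1-8\alpha R+\alpha^2R^2-2\alpha^3R^3\ge 0$. Moreover, let $\mathbf L\colon\mathbb R^n\times\mathbb R^m\to\mathbb R$ be an $R$-smooth convex-concave function with a saddle point $\mathbf z^\star$, let $\mathbf z^0\in\mathbb R^n\times\mathbb R^m$, and let $\alpha=\frac{1}{8R}$ in the EAG-C iteration $$\mathbf z^{k+1/2}=\mathbf z^k+\tfrac{1}{k+2}(\mathbf z^0-\mathbf z^k)-\alpha\,\mathbf G(\mathbf z^k),\qquad \mathbf z^{k+1}=\mathbf z^k+\tfrac{1}{k+2}(\mathbf z^0-\mathbf z^k)-\alpha\,\mathbf G(\mathbf z^{k+1/2}),\quad k\ge0.$$ Then for all $k\ge 0$, $$\|\nabla\mathbf L(\mathbf z^k)\|^2\le\frac{260R^2\|\mathbf z^0-\mathbf z^\star\|^2}{(k+1)^2}.$$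
   Context: Write $\mathbf z=(\mathbf x,\mathbf y)$. $\mathbf L$ convex-concave: convex in $\mathbf x$ for fixed $\mathbf y$, concave in $\mathbf y$ for fixed $\mathbf x$. A saddle point $(\mathbf x^\star,\mathbf y^\star)$ satisfies $\mathbf L(\mathbf x^\star,\mathbf y)\le\mathbf L(\mathbf x^\star,\mathbf y^\star)\le\mathbf L(\mathbf x,\mathbf y^\star)$ for all $\mathbf x,\mathbf y$. $\mathbf G(\mathbf z)=(\nabla_{\mathbf x}\mathbf L(\mathbf x,\mathbf y),-\nabla_{\mathbf y}\mathbf L(\mathbf x,\mathbf y))$; $\mathbf L$ is $R$-smooth if it is differentiable and $\mathbf G$ is $R$-Lipschitz. *)

theory Defs
  imports "HOL-Analysis.Analysis"
begin

definition grad :: "('a::real_inner \<Rightarrow> real) \<Rightarrow> 'a \<Rightarrow> 'a" where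
  "grad f z = (SOME g. (f has_derivative (\<lambda>h. g \<bullet> h)) (at z))"

definition convex_concave :: "('a::real_vector \<Rightarrow> 'b::real_vector \<Rightarrow> real) \<Rightarrow> bool" where
  "convex_concave L \<longleftrightarrow> (\<forall>y. convex_on UNIV (\<lambda>x. L x y)) \<and> (\<forall>x. concave_on UNIV (\<lambda>y. L x y))"

definition saddle_point :: "('a \<Rightarrow> 'b \<Rightarrow> real) \<Rightarrow> 'a \<times> 'b \<Rightarrow> bool" where
  "saddle_point L zs \<longleftrightarrow>
     (\<forall>x y. L (fst zs) y \<le> L (fst zs) (snd zs) \<and> L (fst zs) (snd zs) \<le> L x (snd zs))"

definition joint :: "('a \<Rightarrow> 'b \<Rightarrow> real) \<Rightarrow> 'a \<times> 'b \<Rightarrow> real" where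
  "joint L z = L (fst z) (snd z)"

definition saddle_op :: "('a::real_inner \<Rightarrow> 'b::real_inner \<Rightarrow> real) \<Rightarrow> 'a \<times> 'b \<Rightarrow> 'a \<times> 'b" where
  "saddle_op L z = (grad (\<lambda>x. L x (snd z)) (fst z), - grad (\<lambda>y. L (fst z) y) (snd z))"

definition R_smooth :: "real \<Rightarrow> ('a::real_inner \<Rightarrow> 'b::real_inner \<Rightarrow> real) \<Rightarrow> bool" where
  "R_smooth R L \<longleftrightarrow> (\<forall>z. joint L differentiable (at z)) \<and>
     (\<forall>z w. norm (saddle_op L z - saddle_op L w) \<le> R * norm (z - w))"

end

theory Submission
  imports Defs
begin

text \<open>
  The saddle operator G of a smooth convex-concave L is monotone, R-Lipschitz, vanishes at the
  saddle point and has the norm of the gradient of L, so it suffices to analyse EAG-C for a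
  monotone R-Lipschitz operator F with \<alpha> = 1/(8R). The potential
  V k = \<alpha> a_k |F z_k|^2 + (k+1) \<langle>F z_k, z_k - z_0\<rangle>, a_k = (k+1)(k+2)/2 - k/4,
  is nonincreasing: V k - V (k+1) is a nonnegative combination of the monotonicity inequality
  for z_(k+1), z_k, the Lipschitz inequality for z_(k+1), z_(k+1/2), and a positive semidefinite
  quadratic form in F z_k, F z_(k+1/2), F z_(k+1). Hence V k \<le> V 0 \<le> \<alpha> R^2 |z_0 - z*|^2, while
  monotonicity at z* bounds V k below by \<alpha> (k+1)^2 |F z_k|^2 / 2 - (k+1) |F z_k| |z_0 - z*|.
  Solving this quadratic inequality in (k+1) |F z_k| gives the constant 260 = 4 + 4 * 8^2.
\<close>

lemma grad_eqI:
  fixes f :: "'a::real_inner \<Rightarrow> real"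
  assumes "(f has_derivative (\<lambda>h. g \<bullet> h)) (at x)"
  shows "grad f x = g"
proof -
  have "(f has_derivative (\<lambda>h. grad f x \<bullet> h)) (at x)"
    unfolding grad_def using assms by (rule someI)
  then have "(\<lambda>h. grad f x \<bullet> h) = (\<lambda>h. g \<bullet> h)"
    using assms by (rule has_derivative_unique)
  then have "(grad f x - g) \<bullet> (grad f x - g) = 0"
    by (metis inner_diff_left diff_self)
  then show ?thesis by simp
qed

lemma has_derivative_grad:
  fixes f :: "'a::euclidean_space \<Rightarrow> real"
  assumes "f differentiable (at x)"
  shows "(f has_derivative (\<lambda>h. grad f x \<bullet> h)) (at x)"
proof -
  obtain D where D: "(f has_derivative D) (at x)"
    using assms differentiable_def by blast
  have "D = (\<lambda>h. adjoint D 1 \<bullet> h)"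
    using adjoint_works[OF has_derivative_linear[OF D], of _ 1] by (simp add: fun_eq_iff inner_commute)
  with D have "(f has_derivative (\<lambda>h. adjoint D 1 \<bullet> h)) (at x)" by simp
  then show ?thesis using grad_eqI by metis
qed

lemma convex_on_above_tangent:
  fixes f :: "'a::real_inner \<Rightarrow> real"
  assumes convex: "convex_on UNIV f" and deriv: "(f has_derivative (\<lambda>h. g \<bullet> h)) (at x)"
  shows "f x + g \<bullet> (y - x) \<le> f y"
proof -
  define \<gamma> where "\<gamma> t = x + t *\<^sub>R (y - x)" for t :: real
  have \<gamma>_affine: "\<gamma> ((1 - u) * s + u * t) = (1 - u) *\<^sub>R \<gamma> s + u *\<^sub>R \<gamma> t" for u s t
    unfolding \<gamma>_def by (simp add: algebra_simps)
  have convex_line: "convex_on UNIV (f \<circ> \<gamma>)"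
  proof (rule convex_onI)
    fix s t u :: real assume "0 < u" "u < 1"
    then show "(f \<circ> \<gamma>) ((1 - u) *\<^sub>R s + u *\<^sub>R t) \<le> (1 - u) * (f \<circ> \<gamma>) s + u * (f \<circ> \<gamma>) t"
      using convex by (simp add: \<gamma>_affine convex_onD)
  qed simp
  have "(\<gamma> has_derivative (\<lambda>t. t *\<^sub>R (y - x))) (at 0)"
    unfolding \<gamma>_def by (auto intro!: derivative_eq_intros)
  then have "((f \<circ> \<gamma>) has_derivative (\<lambda>h. g \<bullet> h) \<circ> (\<lambda>t. t *\<^sub>R (y - x))) (at 0)"
    using deriv by (intro diff_chain_at) (simp_all add: \<gamma>_def)
  moreover have "(\<lambda>h. g \<bullet> h) \<circ> (\<lambda>t. t *\<^sub>R (y - x)) = (*) (g \<bullet> (y - x))"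
    by (simp add: fun_eq_iff)
  ultimately have "((f \<circ> \<gamma>) has_field_derivative (g \<bullet> (y - x))) (at 0)"
    by (simp add: has_field_derivative_def)
  then have "(f \<circ> \<gamma>) 1 - (f \<circ> \<gamma>) 0 \<ge> (g \<bullet> (y - x)) * (1 - 0)"
    by (intro convex_on_imp_above_tangent[OF convex_line]) auto
  then show ?thesis by (simp add: \<gamma>_def)
qed

lemma has_derivative_joint_partials:
  fixes L :: "'a::euclidean_space \<Rightarrow> 'b::euclidean_space \<Rightarrow> real"
  assumes "joint L differentiable (at (x, y))"
  shows "((\<lambda>x'. L x' y) has_derivative (\<lambda>h. fst (grad (joint L) (x, y)) \<bullet> h)) (at x)"
    and "((\<lambda>y'. L x y') has_derivative (\<lambda>h. snd (grad (joint L) (x, y)) \<bullet> h)) (at y)"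
proof -
  obtain gx gy where g: "grad (joint L) (x, y) = (gx, gy)" by fastforce
  have J: "(joint L has_derivative (\<lambda>h. (gx, gy) \<bullet> h)) (at (x, y))"
    using has_derivative_grad[OF assms] by (simp add: g)
  have "((joint L \<circ> (\<lambda>x'. (x', y))) has_derivative ((\<lambda>h. (gx, gy) \<bullet> h) \<circ> (\<lambda>h. (h, 0)))) (at x)"
    using J by (intro diff_chain_at) (auto intro!: derivative_eq_intros)
  then show "((\<lambda>x'. L x' y) has_derivative (\<lambda>h. fst (grad (joint L) (x, y)) \<bullet> h)) (at x)"
    by (simp add: g o_def joint_def)
  have "((joint L \<circ> (\<lambda>y'. (x, y'))) has_derivative ((\<lambda>h. (gx, gy) \<bullet> h) \<circ> (\<lambda>h. (0, h)))) (at y)"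
    using J by (intro diff_chain_at) (auto intro!: derivative_eq_intros)
  then show "((\<lambda>y'. L x y') has_derivative (\<lambda>h. snd (grad (joint L) (x, y)) \<bullet> h)) (at y)"
    by (simp add: g o_def joint_def)
qed

lemma saddle_op_eq_grad_joint:
  fixes L :: "'a::euclidean_space \<Rightarrow> 'b::euclidean_space \<Rightarrow> real"
  assumes "joint L differentiable (at z)"
  shows "saddle_op L z = (fst (grad (joint L) z), - snd (grad (joint L) z))"
proof -
  obtain x y where z: "z = (x, y)" by fastforce
  note partials = has_derivative_joint_partials[OF assms[unfolded z]]
  show ?thesis
    using grad_eqI[OF partials(1)] grad_eqI[OF partials(2)] by (simp add: saddle_op_def z)
qed

lemma norm_grad_joint_eq_norm_saddle_op:
  fixes L :: "'a::euclidean_space \<Rightarrow> 'b::euclidean_space \<Rightarrow> real"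
  assumes "joint L differentiable (at z)"
  shows "norm (grad (joint L) z) = norm (saddle_op L z)"
  using saddle_op_eq_grad_joint[OF assms] by (cases "grad (joint L) z") (simp add: norm_Pair)

lemma convex_concave_tangents:
  fixes L :: "'a::euclidean_space \<Rightarrow> 'b::euclidean_space \<Rightarrow> real"
  assumes diff: "\<And>z. joint L differentiable (at z)" and cc: "convex_concave L"
  shows "L x y + fst (saddle_op L (x, y)) \<bullet> (x' - x) \<le> L x' y"
    and "L x y' \<le> L x y - snd (saddle_op L (x, y)) \<bullet> (y' - y)"
proof -
  note partials = has_derivative_joint_partials[OF diff[of "(x, y)"]]
  note G = saddle_op_eq_grad_joint[OF diff[of "(x, y)"]]
  have convex: "convex_on UNIV (\<lambda>x. L x y)" "convex_on UNIV (\<lambda>y. - L x y)"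
    using cc by (auto simp: convex_concave_def concave_on_def)
  have minus: "((\<lambda>y. - L x y) has_derivative (\<lambda>h. (- snd (grad (joint L) (x, y))) \<bullet> h)) (at y)"
    using has_derivative_minus[OF partials(2)] by (simp only: inner_minus_left)
  show "L x y + fst (saddle_op L (x, y)) \<bullet> (x' - x) \<le> L x' y"
    using convex_on_above_tangent[OF convex(1) partials(1)] by (simp add: G)
  show "L x y' \<le> L x y - snd (saddle_op L (x, y)) \<bullet> (y' - y)"
    using convex_on_above_tangent[OF convex(2) minus, of y'] by (simp add: G)
qed

definition monotone_operator :: "('a::real_inner \<Rightarrow> 'a) \<Rightarrow> bool" where
  "monotone_operator F \<longleftrightarrow> (\<forall>p q. 0 \<le> (F p - F q) \<bullet> (p - q))"

lemma monotone_operator_saddle_op: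
  fixes L :: "'a::euclidean_space \<Rightarrow> 'b::euclidean_space \<Rightarrow> real"
  assumes "\<And>z. joint L differentiable (at z)" and "convex_concave L"
  shows "monotone_operator (saddle_op L)"
  unfolding monotone_operator_def
proof (intro allI)
  fix p q :: "'a \<times> 'b"
  obtain x y x' y' where pq: "p = (x, y)" "q = (x', y')" by fastforce
  obtain a b c d where G: "saddle_op L (x, y) = (a, b)" "saddle_op L (x', y') = (c, d)" by fastforce
  have "L x y + a \<bullet> (x' - x) \<le> L x' y" "L x' y' + c \<bullet> (x - x') \<le> L x y'"
       "L x y' \<le> L x y - b \<bullet> (y' - y)" "L x' y \<le> L x' y' - d \<bullet> (y - y')"
    using convex_concave_tangents[OF assms] G by (metis fst_conv snd_conv)+
  then show "0 \<le> (saddle_op L p - saddle_op L q) \<bullet> (p - q)"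
    by (simp add: pq G inner_diff_left inner_diff_right)
qed

lemma saddle_op_saddle_point:
  fixes L :: "'a::euclidean_space \<Rightarrow> 'b::euclidean_space \<Rightarrow> real"
  assumes "joint L differentiable (at zs)" and "saddle_point L zs"
  shows "saddle_op L zs = 0"
proof -
  obtain x y where zs: "zs = (x, y)" by fastforce
  note partials = has_derivative_joint_partials[OF assms(1)[unfolded zs]]
  have "\<forall>x'\<in>UNIV. L x y \<le> L x' y" and "\<forall>y'\<in>UNIV. L x y' \<le> L x y"
    using assms(2) by (simp_all add: saddle_point_def zs)
  then have "(\<lambda>h. fst (grad (joint L) (x, y)) \<bullet> h) = (\<lambda>h. 0)"
    and "(\<lambda>h. snd (grad (joint L) (x, y)) \<bullet> h) = (\<lambda>h. 0)"
    using differential_zero_maxmin[OF _ open_UNIV partials(1)]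
          differential_zero_maxmin[OF _ open_UNIV partials(2)] by blast+
  then have "fst (grad (joint L) (x, y)) = 0" and "snd (grad (joint L) (x, y)) = 0"
    by (metis inner_eq_zero_iff)+
  then show ?thesis
    using saddle_op_eq_grad_joint[OF assms(1)] by (simp add: zs zero_prod_def)
qed

lemma eag_quadratic_form_nonneg:
  fixes G Gh Gp :: "'a::real_inner" and n :: real
  assumes n: "2 \<le> n"
  shows "0 \<le> (15/32 * n^2 - 3/4 * n + 1/2) * (G \<bullet> G) + (63/32 * n^2) * (Gh \<bullet> Gh)
              + (3/2 * n^2 - n/4 - 1/4) * (Gp \<bullet> Gp) + (n - 15/16 * n^2) * (G \<bullet> Gh) - 3 * n^2 * (Gh \<bullet> Gp)"
    (is "0 \<le> ?Q")
proof -
  define a where "a = 15/32 * n^2 - 3/4 * n + 1/2"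
  define b where "b = (n - 15/16 * n^2) / 2"
  define c where "c = 3/2 * n^2 - n/4 - 1/4"
  define d where "d = n^2 * (216 * n^2 + 280 * n - 752) / 4096"
  have "2 * n \<le> n^2" using n by (simp add: power2_eq_square)
  then have a_pos: "0 < a" and c_pos: "0 < c" and d_nonneg: "0 \<le> d"
    using n unfolding a_def c_def d_def by (auto intro!: mult_nonneg_nonneg)
  have "a * c * ?Q = a * (norm (c *\<^sub>R Gp - (3/2 * n^2) *\<^sub>R Gh))^2
                   + c * (norm (a *\<^sub>R G + b *\<^sub>R Gh))^2 + d * (Gh \<bullet> Gh)"
    unfolding power2_norm_eq_inner a_def b_def c_def d_def
    by (simp add: inner_add_left inner_add_right inner_diff_left inner_diff_right inner_commute
        algebra_simps power2_eq_square divide_simps)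
  also have "0 \<le> \<dots>" using a_pos c_pos d_nonneg by simp
  finally have "0 \<le> (a * c) * ?Q" .
  moreover have "0 < a * c" using a_pos c_pos by simp
  ultimately show ?thesis by (simp add: zero_le_mult_iff)
qed

lemma eag_potential_step_inequality:
  fixes G Gh Gp u v :: "'a::real_inner" and n \<alpha> :: real
  assumes n: "2 \<le> n" and \<alpha>: "0 < \<alpha>"
    and v: "v = u - (1 / n) *\<^sub>R u - \<alpha> *\<^sub>R Gh"
    and mono: "0 \<le> (Gp - G) \<bullet> (v - u)"
    and lip: "norm (Gp - Gh) \<le> norm (G - Gh) / 8"
  shows "\<alpha> * (n * (n + 1) / 2 - (n - 1) / 4) * (norm Gp)^2 + n * (Gp \<bullet> v)
       \<le> \<alpha> * ((n - 1) * n / 2 - (n - 2) / 4) * (norm G)^2 + (n - 1) * (G \<bullet> u)"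
proof -
  have n_v: "n * (Gp \<bullet> v) = (n - 1) * (Gp \<bullet> u) - n * \<alpha> * (Gh \<bullet> Gp)"
    using n unfolding v by (simp add: inner_diff_right inner_add_right inner_commute field_simps)
  define mono_slack where "mono_slack = G \<bullet> u - Gp \<bullet> u - n * \<alpha> * (Gh \<bullet> Gp) + n * \<alpha> * (G \<bullet> Gh)"
  define lip_slack where
    "lip_slack = (G \<bullet> G - 2 * (G \<bullet> Gh) + Gh \<bullet> Gh) / 64 - (Gp \<bullet> Gp - 2 * (Gh \<bullet> Gp) + Gh \<bullet> Gh)"
  define Q where "Q = (15/32 * n^2 - 3/4 * n + 1/2) * (G \<bullet> G) + (63/32 * n^2) * (Gh \<bullet> Gh)
              + (3/2 * n^2 - n/4 - 1/4) * (Gp \<bullet> Gp) + (n - 15/16 * n^2) * (G \<bullet> Gh) - 3 * n^2 * (Gh \<bullet> Gp)"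
  have "0 \<le> n * ((Gp - G) \<bullet> (v - u))" using n mono by simp
  also have "\<dots> = mono_slack"
    using n unfolding v mono_slack_def
    by (simp add: inner_diff_left inner_diff_right inner_commute algebra_simps)
  finally have "0 \<le> mono_slack" .
  have "(norm (Gp - Gh))^2 \<le> (norm (G - Gh) / 8)^2" using lip by (simp add: power_mono)
  then have "0 \<le> lip_slack"
    unfolding lip_slack_def power2_norm_eq_inner power_divide
    by (simp add: inner_diff_left inner_diff_right inner_commute)
  have "0 \<le> Q"
    unfolding Q_def by (rule eag_quadratic_form_nonneg[OF n])
  have "\<alpha> * ((n - 1) * n / 2 - (n - 2) / 4) * (G \<bullet> G) + (n - 1) * (G \<bullet> u)
        - (\<alpha> * (n * (n + 1) / 2 - (n - 1) / 4) * (Gp \<bullet> Gp) + n * (Gp \<bullet> v))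
      = (n - 1) * mono_slack + 2 * n^2 * \<alpha> * lip_slack + \<alpha> * Q"
    unfolding n_v mono_slack_def lip_slack_def Q_def
    by (simp add: algebra_simps power2_eq_square divide_simps)
  moreover have "0 \<le> (n - 1) * mono_slack + 2 * n^2 * \<alpha> * lip_slack + \<alpha> * Q"
    using n \<alpha> \<open>0 \<le> mono_slack\<close> \<open>0 \<le> lip_slack\<close> \<open>0 \<le> Q\<close> by simp
  ultimately show ?thesis unfolding power2_norm_eq_inner by linarith
qed

lemma sq_le_of_half_sq_minus_linear_le:
  fixes x b c :: real
  assumes "x^2 / 2 - b * x \<le> c"
  shows "x^2 \<le> 4 * c + 4 * b^2"
proof -
  have "0 \<le> (x / 2 - b)^2" by simp
  then have "b * x \<le> x^2 / 4 + b^2" by (simp add: power2_eq_square algebra_simps)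
  then show ?thesis using assms by linarith
qed

lemma step_size_polynomials_nonneg:
  fixes t :: real
  assumes "0 < t" and "t \<le> 1 / 8"
  shows "0 \<le> 1 - 3*t - t^2 - t^3" and "0 \<le> 1 - 8*t + t^2 - 2*t^3"
proof -
  have "t^2 \<le> t / 8" and "t^3 \<le> t^2 / 8"
    using assms by (simp_all add: power2_eq_square power3_eq_cube mult_left_mono)
  moreover have "0 \<le> t^2" by simp
  ultimately show "0 \<le> 1 - 3*t - t^2 - t^3" and "0 \<le> 1 - 8*t + t^2 - 2*t^3"
    using assms by linarith+
qed

locale eag_c =
  fixes F :: "'a::real_inner \<Rightarrow> 'a" and R \<alpha> :: real and z zh :: "nat \<Rightarrow> 'a"
  assumes R_pos: "0 < R"
    and step_size: "\<alpha> = 1 / (8 * R)"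
    and monotone: "monotone_operator F"
    and lipschitz: "\<And>p q. norm (F p - F q) \<le> R * norm (p - q)"
    and half_step: "\<And>k. zh k = z k + (1 / (real k + 2)) *\<^sub>R (z 0 - z k) - \<alpha> *\<^sub>R F (z k)"
    and full_step: "\<And>k. z (Suc k) = z k + (1 / (real k + 2)) *\<^sub>R (z 0 - z k) - \<alpha> *\<^sub>R F (zh k)"
begin

lemma step_size_pos: "0 < \<alpha>"
  using R_pos by (simp add: step_size)

definition potential :: "nat \<Rightarrow> real" where
  "potential k = \<alpha> * ((real k + 1) * (real k + 2) / 2 - real k / 4) * (norm (F (z k)))^2
                 + (real k + 1) * (F (z k) \<bullet> (z k - z 0))"

lemma potential_Suc_le: "potential (Suc k) \<le> potential k"
proof -
  define n where "n = real k + 2"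
  have v: "z (Suc k) - z 0 = (z k - z 0) - (1 / n) *\<^sub>R (z k - z 0) - \<alpha> *\<^sub>R F (zh k)"
    by (simp add: full_step n_def algebra_simps)
  have mono: "0 \<le> (F (z (Suc k)) - F (z k)) \<bullet> ((z (Suc k) - z 0) - (z k - z 0))"
    using monotone by (simp add: monotone_operator_def)
  have "z (Suc k) - zh k = \<alpha> *\<^sub>R (F (z k) - F (zh k))"
    by (simp add: full_step half_step algebra_simps)
  then have "norm (F (z (Suc k)) - F (zh k)) \<le> R * (\<alpha> * norm (F (z k) - F (zh k)))"
    using lipschitz[of "z (Suc k)" "zh k"] step_size_pos by simp
  then have lip: "norm (F (z (Suc k)) - F (zh k)) \<le> norm (F (z k) - F (zh k)) / 8"
    using R_pos by (simp add: step_size)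
  have "2 \<le> n" by (simp add: n_def)
  from eag_potential_step_inequality[OF this step_size_pos v mono lip]
  show ?thesis
    unfolding potential_def n_def by (simp add: algebra_simps)
qed

lemma potential_le_potential_0: "potential k \<le> potential 0"
  using decseq_SucI[of potential, OF potential_Suc_le] by (simp add: decseq_def)

context
  fixes zs :: 'a
  assumes zero: "F zs = 0"
begin

lemma potential_0_le: "potential 0 \<le> \<alpha> * (R * norm (z 0 - zs))^2"
proof -
  have "norm (F (z 0)) \<le> R * norm (z 0 - zs)"
    using lipschitz[of "z 0" zs] by (simp add: zero)
  then show ?thesis
    using step_size_pos by (simp add: potential_def mult_left_mono power_mono)
qed

lemma potential_lower_bound:
  "\<alpha> * (real k + 1)^2 / 2 * (norm (F (z k)))^2 - (real k + 1) * norm (F (z k)) * norm (z 0 - zs)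
     \<le> potential k"
proof -
  have leading: "\<alpha> * (real k + 1)^2 / 2 * (norm (F (z k)))^2
        \<le> \<alpha> * ((real k + 1) * (real k + 2) / 2 - real k / 4) * (norm (F (z k)))^2"
    using step_size_pos by (intro mult_right_mono mult_left_mono) (simp_all add: power2_eq_square field_simps)
  moreover have "F (z k) \<bullet> (z k - z 0) = (F (z k) - F zs) \<bullet> (z k - zs) + F (z k) \<bullet> (zs - z 0)"
    by (simp add: zero inner_diff_right)
  moreover have "0 \<le> (F (z k) - F zs) \<bullet> (z k - zs)"
    using monotone by (simp add: monotone_operator_def)
  moreover have "- (norm (F (z k)) * norm (z 0 - zs)) \<le> F (z k) \<bullet> (zs - z 0)"
    using norm_cauchy_schwarz[of "F (z k)" "z 0 - zs"] by (simp add: inner_diff_right)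
  ultimately have "- (norm (F (z k)) * norm (z 0 - zs)) \<le> F (z k) \<bullet> (z k - z 0)"
    by linarith
  then have "(real k + 1) * - (norm (F (z k)) * norm (z 0 - zs)) \<le> (real k + 1) * (F (z k) \<bullet> (z k - z 0))"
    by (intro mult_left_mono) simp_all
  with leading show ?thesis
    unfolding potential_def by linarith
qed

theorem norm_sq_le:
  "(norm (F (z k)))^2 \<le> 260 * R^2 * (norm (z 0 - zs))^2 / (real k + 1)^2"
proof -
  define X where "X = (real k + 1) * norm (F (z k))"
  define D where "D = norm (z 0 - zs)"
  have "\<alpha> * X^2 / 2 - X * D
        = \<alpha> * (real k + 1)^2 / 2 * (norm (F (z k)))^2 - (real k + 1) * norm (F (z k)) * D"
    by (simp add: X_def power_mult_distrib)
  then have "\<alpha> * X^2 / 2 - X * D \<le> \<alpha> * (R * D)^2"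
    using potential_lower_bound[of k] potential_le_potential_0[of k] potential_0_le
    unfolding D_def by linarith
  then have "8 * R * (\<alpha> * X^2 / 2 - X * D) \<le> 8 * R * (\<alpha> * (R * D)^2)"
    using R_pos by simp
  then have "X^2 / 2 - (8 * R * D) * X \<le> (R * D)^2"
    using R_pos by (simp add: step_size algebra_simps)
  from sq_le_of_half_sq_minus_linear_le[OF this]
  have "(real k + 1)^2 * (norm (F (z k)))^2 \<le> 260 * R^2 * D^2"
    by (simp add: X_def power_mult_distrib power2_eq_square algebra_simps)
  then show ?thesis
    by (simp add: D_def field_simps)
qed

end

end

theorem corollary1:
  fixes R :: real
    and L :: "real^'n \<Rightarrow> real^'m \<Rightarrow> real"
    and zs :: "(real^'n) \<times> (real^'m)"
    and z zh :: "nat \<Rightarrow> (real^'n) \<times> (real^'m)"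
    and \<alpha> :: real
  assumes R_pos: "R > 0"
  shows "(\<forall>a. 0 < a \<and> a \<le> 1 / (8 * R) \<longrightarrow>
            1 - 3*a*R - a^2*R^2 - a^3*R^3 \<ge> 0 \<and> 1 - 8*a*R + a^2*R^2 - 2*a^3*R^3 \<ge> 0)
       \<and> ((R_smooth R L \<and> convex_concave L \<and> saddle_point L zs \<and> \<alpha> = 1 / (8 * R)
           \<and> (\<forall>k. zh k = z k + (1 / (real k + 2)) *\<^sub>R (z 0 - z k) - \<alpha> *\<^sub>R saddle_op L (z k))
           \<and> (\<forall>k. z (Suc k) = z k + (1 / (real k + 2)) *\<^sub>R (z 0 - z k) - \<alpha> *\<^sub>R saddle_op L (zh k)))
          \<longrightarrow> (\<forall>k. (norm (grad (joint L) (z k)))^2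
                     \<le> 260 * R^2 * (norm (z 0 - zs))^2 / (real k + 1)^2))"
proof (intro conjI allI impI)
  fix a :: real
  assume "0 < a \<and> a \<le> 1 / (8 * R)"
  then have "0 < a * R" and "a * R \<le> 1 / 8"
    using R_pos by (simp_all add: field_simps)
  from step_size_polynomials_nonneg[OF this]
  show "1 - 3*a*R - a^2*R^2 - a^3*R^3 \<ge> 0" and "1 - 8*a*R + a^2*R^2 - 2*a^3*R^3 \<ge> 0"
    by (simp_all add: power_mult_distrib mult.assoc)
next
  fix k
  assume H: "R_smooth R L \<and> convex_concave L \<and> saddle_point L zs \<and> \<alpha> = 1 / (8 * R)
           \<and> (\<forall>k. zh k = z k + (1 / (real k + 2)) *\<^sub>R (z 0 - z k) - \<alpha> *\<^sub>R saddle_op L (z k))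
           \<and> (\<forall>k. z (Suc k) = z k + (1 / (real k + 2)) *\<^sub>R (z 0 - z k) - \<alpha> *\<^sub>R saddle_op L (zh k))"
  then have diff: "\<And>z. joint L differentiable (at z)"
    and lip: "\<And>p q. norm (saddle_op L p - saddle_op L q) \<le> R * norm (p - q)"
    unfolding R_smooth_def by blast+
  interpret eag_c "saddle_op L" R \<alpha> z zh
    using H R_pos monotone_operator_saddle_op[OF diff] lip by unfold_locales auto
  have "saddle_op L zs = 0"
    using H diff saddle_op_saddle_point by blast
  then show "(norm (grad (joint L) (z k)))^2 \<le> 260 * R^2 * (norm (z 0 - zs))^2 / (real k + 1)^2"
    using norm_sq_le norm_grad_joint_eq_norm_saddle_op[OF diff] by metis
qed

end
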